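(* Let $n$ be a positive integer. (a) $\mu(n,3)=\mu(n,2)$. (b) If $n\ge 3$, then $\mu^*(n,3)=4k-1$ if $n=6k-3$ for some positive integer $k$, and $\mu^*(n,3)=\mu(n,3)$ otherwise.
   Context: Let $\mathbb F_2=\{0,1\}$ be the field with two elements. For $u\in\mathbb F_2^n$, $|u|$ denotes the Hamming weight of $u$ (the number of entries equal to $1$). A wiring on $n$ vertices is a matrix $W=(w_{i,j})\in M(n,n;\mathbb F_2)$ with $w_{i,i}=1$ for all $i$. The degree of vertex $j$ is the number of $1$s in the $j$th column of $W$, and $\deg(W)$ is the maximum degree over all vertices. For $c\in\mathbb F_2^n$, $M(W,c)=\max\{|Wx+c| : x\in\mathbb F_2^n\}$. For $n,m\ge1$, $A(n,m)$ is the set of wirings on $n$ vertices with $\deg(W)\le m$; for $n\ge m$, $A^*(n,m)$ is the set of wirings on $n$ vertices in which every vertex has degree exactly $m$. Define $\mu(n,m)=\min\{M(W,0): W\in A(n,m)\}$ and, for $n\ge m$, $\mu^*(n,m)=\min\{M(W,0): W\in A^*(n,m)\}$. *)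

theory Defs
  imports Main
begin

text \<open>Vectors in F_2^n are functions nat => bool read only on {0..<n};
  an n x n matrix over F_2 is a function nat => nat => bool (row i, column j),
  read only on indices < n; we require it to be False outside, so that the
  set of wirings is a genuine finite set of matrices.\<close>

definition is_matrix :: "nat \<Rightarrow> (nat \<Rightarrow> nat \<Rightarrow> bool) \<Rightarrow> bool" where
  "is_matrix n W \<longleftrightarrow> (\<forall>i j. W i j \<longrightarrow> i < n \<and> j < n)"

definition is_wiring :: "nat \<Rightarrow> (nat \<Rightarrow> nat \<Rightarrow> bool) \<Rightarrow> bool" where
  "is_wiring n W \<longleftrightarrow> is_matrix n W \<and> (\<forall>i<n. W i i)"

definition vdeg :: "nat \<Rightarrow> (nat \<Rightarrow> nat \<Rightarrow> bool) \<Rightarrow> nat \<Rightarrow> nat" where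
  "vdeg n W j = card {i. i < n \<and> W i j}"

definition mv_entry :: "nat \<Rightarrow> (nat \<Rightarrow> nat \<Rightarrow> bool) \<Rightarrow> (nat \<Rightarrow> bool) \<Rightarrow> (nat \<Rightarrow> bool) \<Rightarrow> nat \<Rightarrow> bool" where
  "mv_entry n W x c i \<longleftrightarrow> (odd (card {j. j < n \<and> W i j \<and> x j}) \<noteq> c i)"

definition weight_Wxc :: "nat \<Rightarrow> (nat \<Rightarrow> nat \<Rightarrow> bool) \<Rightarrow> (nat \<Rightarrow> bool) \<Rightarrow> (nat \<Rightarrow> bool) \<Rightarrow> nat" where
  "weight_Wxc n W x c = card {i. i < n \<and> mv_entry n W x c i}"

definition M :: "nat \<Rightarrow> (nat \<Rightarrow> nat \<Rightarrow> bool) \<Rightarrow> (nat \<Rightarrow> bool) \<Rightarrow> nat" where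
  "M n W c = Max {weight_Wxc n W x c | x. \<forall>j. x j \<longrightarrow> j < n}"

definition A :: "nat \<Rightarrow> nat \<Rightarrow> (nat \<Rightarrow> nat \<Rightarrow> bool) set" where
  "A n m = {W. is_wiring n W \<and> (\<forall>j<n. vdeg n W j \<le> m)}"

definition A_star :: "nat \<Rightarrow> nat \<Rightarrow> (nat \<Rightarrow> nat \<Rightarrow> bool) set" where
  "A_star n m = {W. is_wiring n W \<and> (\<forall>j<n. vdeg n W j = m)}"

definition mu :: "nat \<Rightarrow> nat \<Rightarrow> nat" where
  "mu n m = Min ((\<lambda>W. M n W (\<lambda>_. False)) ` A n m)"

definition mu_star :: "nat \<Rightarrow> nat \<Rightarrow> nat" where
  "mu_star n m = Min ((\<lambda>W. M n W (\<lambda>_. False)) ` A_star n m)"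

end

theory Submission
  imports Defs
begin

text \<open>Lower bound: let x maximise |W x|, y = supp (W x) and Z the complement of y. If every
  column has at most three ones, maximality forces W to have no entry w_ij = 1 with
  i \<noteq> j both in Z, so W 1_Z \<supseteq> Z. Comparing |W 1_Z| and |W (x + 1_Z)| with M gives
  2n \<le> 3M. If moreover all degrees are odd, |W 1_Z| \<equiv> |Z| (mod 2), which excludes
  M = 4k - 2 when n = 6k - 3.
  Upper bound: M is subadditive under block-diagonal sums, and direct sums of a few small
  explicit wirings (a 3-cycle of degree 2, degree-3 blocks on 3 to 7 vertices) attain
  \<lceil>2n/3\<rceil>, respectively 4k - 1 for n = 6k - 3.\<close>

abbreviation M0 :: "nat \<Rightarrow> (nat \<Rightarrow> nat \<Rightarrow> bool) \<Rightarrow> nat" where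
  "M0 n W \<equiv> M n W (\<lambda>_. False)"

definition is_vector :: "nat \<Rightarrow> (nat \<Rightarrow> bool) \<Rightarrow> bool" where
  "is_vector n x \<longleftrightarrow> (\<forall>j. x j \<longrightarrow> j < n)"

definition prod_supp :: "nat \<Rightarrow> (nat \<Rightarrow> nat \<Rightarrow> bool) \<Rightarrow> (nat \<Rightarrow> bool) \<Rightarrow> nat set" where
  "prod_supp n W x = {i. i < n \<and> odd (card {j. j < n \<and> W i j \<and> x j})}"

definition col :: "nat \<Rightarrow> (nat \<Rightarrow> nat \<Rightarrow> bool) \<Rightarrow> nat \<Rightarrow> nat set" where
  "col n W j = {i. i < n \<and> W i j}"

lemma weight_Wxc_False: "weight_Wxc n W x (\<lambda>_. False) = card (prod_supp n W x)"
  by (simp add: weight_Wxc_def mv_entry_def prod_supp_def)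

lemma prod_supp_subset: "prod_supp n W x \<subseteq> {..<n}"
  by (auto simp: prod_supp_def)

lemma finite_prod_supp [simp]: "finite (prod_supp n W x)"
  by (simp add: prod_supp_def)

lemma finite_col [simp]: "finite (col n W j)"
  by (simp add: col_def)

lemma vdeg_eq_card_col: "vdeg n W j = card (col n W j)"
  by (simp add: vdeg_def col_def)

lemma weight_Wxc_le: "weight_Wxc n W x c \<le> n"
proof -
  have "{i. i < n \<and> mv_entry n W x c i} \<subseteq> {..<n}" by auto
  from card_mono[OF _ this] show ?thesis by (simp add: weight_Wxc_def)
qed

lemma finite_weights: "finite {weight_Wxc n W x c | x. \<forall>j. x j \<longrightarrow> j < n}"
  by (rule finite_subset[of _ "{..n}"]) (auto simp: weight_Wxc_le)

lemma M_ge: "is_vector n x \<Longrightarrow> weight_Wxc n W x c \<le> M n W c"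
  unfolding M_def is_vector_def by (rule Max_ge[OF finite_weights]) blast

lemma M_attained: obtains x where "is_vector n x" "weight_Wxc n W x c = M n W c"
proof -
  have "{weight_Wxc n W x c | x. \<forall>j. x j \<longrightarrow> j < n} \<noteq> {}" by blast
  from Max_in[OF finite_weights this] show thesis
    using that unfolding M_def is_vector_def by fastforce
qed

lemma M_le: "(\<And>x. is_vector n x \<Longrightarrow> weight_Wxc n W x c \<le> b) \<Longrightarrow> M n W c \<le> b"
  by (metis M_attained)

lemma M_le_n: "M n W c \<le> n"
  by (rule M_le) (rule weight_Wxc_le)

lemma M0_ge: "is_vector n x \<Longrightarrow> card (prod_supp n W x) \<le> M0 n W"
  using M_ge weight_Wxc_False by metis

lemma M0_attained: obtains x where "is_vector n x" "card (prod_supp n W x) = M0 n W"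
  using M_attained weight_Wxc_False by metis

lemma M0_le: "(\<And>x. is_vector n x \<Longrightarrow> card (prod_supp n W x) \<le> b) \<Longrightarrow> M0 n W \<le> b"
  by (rule M_le) (simp add: weight_Wxc_False)

lemma odd_card_sym_diff:
  assumes "finite S" "finite T"
  shows "odd (card (sym_diff S T)) \<longleftrightarrow> (odd (card S) \<noteq> odd (card T))"
proof -
  have "card ((S - T) \<union> (T - S)) = card (S - T) + card (T - S)"
    by (rule card_Un_disjoint) (use assms in auto)
  moreover have "card S = card (S \<inter> T) + card (S - T)"
    using card_Int_Diff[OF assms(1)] .
  moreover have "card T = card (S \<inter> T) + card (T - S)"
    using card_Int_Diff[OF assms(2), of S] by (simp add: Int_commute)
  ultimately show ?thesis by presburger
qed

lemma prod_supp_xor: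
  "prod_supp n W (\<lambda>k. x k \<noteq> z k) = sym_diff (prod_supp n W x) (prod_supp n W z)"
proof -
  have "odd (card {j. j < n \<and> W i j \<and> (x j \<noteq> z j)}) \<longleftrightarrow>
     (odd (card {j. j < n \<and> W i j \<and> x j}) \<noteq> odd (card {j. j < n \<and> W i j \<and> z j}))" for i
  proof -
    let ?P = "{j. j < n \<and> W i j \<and> x j}" and ?Q = "{j. j < n \<and> W i j \<and> z j}"
    have "{j. j < n \<and> W i j \<and> (x j \<noteq> z j)} = sym_diff ?P ?Q" by auto
    then show ?thesis using odd_card_sym_diff[of ?P ?Q] by simp
  qed
  then show ?thesis unfolding prod_supp_def by blast
qed

lemma prod_supp_unit: "j < n \<Longrightarrow> prod_supp n W (\<lambda>k. k = j) = col n W j"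
proof -
  assume j: "j < n"
  have "{k. k < n \<and> W i k \<and> k = j} = (if W i j then {j} else {})" for i
    using j by auto
  then show ?thesis unfolding prod_supp_def col_def by auto
qed

lemma prod_supp_flip:
  "j < n \<Longrightarrow> prod_supp n W (\<lambda>k. x k \<noteq> (k = j)) = sym_diff (prod_supp n W x) (col n W j)"
  using prod_supp_xor[of n W x "\<lambda>k. k = j"] by (simp add: prod_supp_unit)

lemma odd_card_prod_supp:
  assumes "\<forall>j<n. odd (vdeg n W j)" "finite S" "S \<subseteq> {..<n}"
  shows "odd (card (prod_supp n W (\<lambda>k. k \<in> S))) \<longleftrightarrow> odd (card S)"
  using assms(2,3)
proof (induction S rule: finite_induct)
  case empty
  then show ?case by (simp add: prod_supp_def)
next
  case (insert a F)
  then have a: "a < n" by auto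
  have "(\<lambda>k. k \<in> insert a F) = (\<lambda>k. (k \<in> F) \<noteq> (k = a))"
    using insert.hyps(2) by auto
  then have "prod_supp n W (\<lambda>k. k \<in> insert a F) =
      sym_diff (prod_supp n W (\<lambda>k. k \<in> F)) (col n W a)"
    using prod_supp_flip[OF a] by simp
  with odd_card_sym_diff[of "prod_supp n W (\<lambda>k. k \<in> F)" "col n W a"] show ?case
    using insert assms(1) a by (simp add: vdeg_eq_card_col)
qed

lemma wiring_in_A_D:
  assumes "W \<in> A n m"
  shows "W i j \<Longrightarrow> i < n \<and> j < n" "j < n \<Longrightarrow> W j j" "j < n \<Longrightarrow> card (col n W j) \<le> m"
  using assms by (auto simp: A_def is_wiring_def is_matrix_def vdeg_eq_card_col)

text \<open>Flipping a coordinate j outside the support y of a maximal W x0 turns y into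
  sym_diff y (col n W j); if col n W j met the complement of y in a second vertex i,
  at most one of its (at most three) entries would lie in y, and the weight would grow.\<close>

lemma maximizer_complement_independent:
  assumes W: "W \<in> A n 3" and x0: "is_vector n x0" "card (prod_supp n W x0) = M0 n W"
    and i: "i \<in> {..<n} - prod_supp n W x0" and j: "j \<in> {..<n} - prod_supp n W x0"
    and "W i j"
  shows "i = j"
proof (rule ccontr)
  assume "i \<noteq> j"
  define y where "y = prod_supp n W x0"
  define C where "C = col n W j"
  have jn: "j < n" using j by auto
  have "{i, j} \<subseteq> C - y"
    using i j \<open>W i j\<close> wiring_in_A_D[OF W] unfolding C_def col_def y_def by auto
  then have two: "2 \<le> card (C - y)"
    using card_mono[of "C - y" "{i, j}"] \<open>i \<noteq> j\<close> by (simp add: C_def)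
  have "card C \<le> 3" using wiring_in_A_D(3)[OF W jn] by (simp add: C_def)
  then have "card (y \<inter> C) \<le> 1"
    using two card_Int_Diff[of C y] by (simp add: C_def Int_commute)
  then have "M0 n W \<le> card (y - C) + 1"
    using card_Int_Diff[of y C] x0(2) by (simp add: y_def)
  moreover have "card (sym_diff y C) = card (y - C) + card (C - y)"
    by (rule card_Un_disjoint) (auto simp: y_def C_def)
  moreover have "is_vector n (\<lambda>k. x0 k \<noteq> (k = j))"
    using x0(1) jn by (auto simp: is_vector_def)
  from M0_ge[OF this] have "card (sym_diff y C) \<le> M0 n W"
    unfolding prod_supp_flip[OF jn] y_def C_def .
  ultimately show False using two by simp
qed

text \<open>With y the support of a maximal W x0, Z its complement and s the overlap of y with
  W 1_Z \<supseteq> Z, the vectors 1_Z and x0 + 1_Z have weights |Z| + s and |Z| + |y| - s.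
  When all degrees are odd, |W 1_Z| and |Z| have equal parity, so s is even.\<close>

lemma maximizer_split:
  assumes W: "W \<in> A n 3"
  obtains s where "n - M0 n W + s \<le> M0 n W" "n - M0 n W + (M0 n W - s) \<le> M0 n W"
    "s \<le> M0 n W" "\<forall>j<n. odd (vdeg n W j) \<Longrightarrow> even s"
proof -
  obtain x0 where x0: "is_vector n x0" "card (prod_supp n W x0) = M0 n W"
    using M0_attained by blast
  define y where "y = prod_supp n W x0"
  define Z where "Z = {..<n} - y"
  define y2 where "y2 = prod_supp n W (\<lambda>k. k \<in> Z)"
  define s where "s = card (y \<inter> y2)"
  have y: "y \<subseteq> {..<n}" "card y = M0 n W"
    using x0(2) prod_supp_subset by (auto simp: y_def)
  have "i \<in> y2" if "i \<in> Z" for i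
  proof -
    have "{j. j < n \<and> W i j \<and> j \<in> Z} = {i}"
      using that maximizer_complement_independent[OF W x0] wiring_in_A_D(2)[OF W]
      by (auto simp: Z_def y_def)
    then show ?thesis using that by (simp add: y2_def prod_supp_def Z_def)
  qed
  then have y2: "y2 = Z \<union> (y \<inter> y2)" "sym_diff y y2 = (y - y2) \<union> Z"
    using prod_supp_subset[of n W "\<lambda>k. k \<in> Z"] by (auto simp: y2_def Z_def)
  have cZ: "card Z = n - M0 n W"
    using card_Diff_subset[of y "{..<n}"] y by (simp add: Z_def y_def)
  have card_y2: "card y2 = card Z + s"
    unfolding s_def by (subst y2(1)) (rule card_Un_disjoint, auto simp: Z_def y_def)
  have card_sym_diff: "card (sym_diff y y2) = (M0 n W - s) + card Z"
  proof -
    have "card ((y - y2) \<union> Z) = card (y - y2) + card Z"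
      by (rule card_Un_disjoint) (auto simp: Z_def y_def)
    moreover have "card y = s + card (y - y2)"
      unfolding s_def using card_Int_Diff[of y y2] by (simp add: y_def)
    ultimately show ?thesis using y2(2) y(2) by simp
  qed
  show thesis
  proof
    show "n - M0 n W + s \<le> M0 n W"
      using M0_ge[of n "\<lambda>k. k \<in> Z" W] card_y2 cZ by (simp add: is_vector_def Z_def y2_def)
    have "is_vector n (\<lambda>k. x0 k \<noteq> (k \<in> Z))"
      using x0(1) by (auto simp: is_vector_def Z_def)
    from M0_ge[OF this] have "card (sym_diff y y2) \<le> M0 n W"
      unfolding prod_supp_xor y_def y2_def .
    then show "n - M0 n W + (M0 n W - s) \<le> M0 n W"
      using card_sym_diff cZ by simp
    show "s \<le> M0 n W"
      using card_mono[of y "y \<inter> y2"] y by (simp add: s_def y_def)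
    show "even s" if "\<forall>j<n. odd (vdeg n W j)"
      using odd_card_prod_supp[OF that, of Z] card_y2 by (auto simp: Z_def y2_def)
  qed
qed

lemma two_mul_le_three_M0:
  assumes "W \<in> A n 3"
  shows "2 * n \<le> 3 * M0 n W"
proof -
  obtain s where "n - M0 n W + s \<le> M0 n W" "n - M0 n W + (M0 n W - s) \<le> M0 n W" "s \<le> M0 n W"
    using maximizer_split[OF assms] by blast
  then show ?thesis using M_le_n[of n W "\<lambda>_. False"] by linarith
qed

text \<open>For n = 6q + 3 the bound 2n \<le> 3M only gives M \<ge> 4q + 2; equality would force the
  overlap s to be 2q + 1, which is odd.\<close>

lemma M0_ge_mod6_eq3:
  assumes "W \<in> A n 3" "\<forall>j<n. odd (vdeg n W j)" "n mod 6 = 3"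
  shows "2 * n + 3 \<le> 3 * M0 n W"
proof (rule ccontr)
  obtain s where s: "n - M0 n W + s \<le> M0 n W" "n - M0 n W + (M0 n W - s) \<le> M0 n W"
    "s \<le> M0 n W" "even s"
    using maximizer_split[OF assms(1)] assms(2) by blast
  define q where "q = n div 6"
  have n: "n = 6 * q + 3" using assms(3) div_mult_mod_eq[of n 6] by (simp add: q_def)
  assume "\<not> 2 * n + 3 \<le> 3 * M0 n W"
  then have "M0 n W = 4 * q + 2" using two_mul_le_three_M0[OF assms(1)] n by linarith
  then have "s = 2 * q + 1" using s(1-3) n by linarith
  then show False using s(4) by simp
qed

definition bounded_wiring :: "nat \<Rightarrow> (nat \<Rightarrow> nat \<Rightarrow> bool) \<Rightarrow> (nat \<Rightarrow> bool) \<Rightarrow> nat \<Rightarrow> bool" where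
  "bounded_wiring n W P b \<longleftrightarrow> is_wiring n W \<and> (\<forall>j<n. P (vdeg n W j)) \<and> M0 n W \<le> b"

definition block_diag ::
    "nat \<Rightarrow> (nat \<Rightarrow> nat \<Rightarrow> bool) \<Rightarrow> nat \<Rightarrow> (nat \<Rightarrow> nat \<Rightarrow> bool) \<Rightarrow> nat \<Rightarrow> nat \<Rightarrow> bool" where
  "block_diag n W n' W' = (\<lambda>i j. (i < n \<and> j < n \<and> W i j) \<or>
      (n \<le> i \<and> n \<le> j \<and> i < n + n' \<and> j < n + n' \<and> W' (i - n) (j - n)))"

lemma shifted_Collect: "{j. n \<le> j \<and> P (j - n)} = (\<lambda>j. j + n) ` {j::nat. P j}"
  by (auto simp: image_iff) (metis le_add_diff_inverse2)

lemma card_shifted_Collect: "card {j. n \<le> j \<and> P (j - n)} = card {j::nat. P j}"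
  by (simp add: shifted_Collect card_image)

lemma is_wiring_block_diag:
  assumes "is_wiring n W" "is_wiring n' W'"
  shows "is_wiring (n + n') (block_diag n W n' W')"
  using assms unfolding is_wiring_def is_matrix_def block_diag_def
  by (metis add_diff_inverse_nat add_less_cancel_left le_add1 less_le_trans not_less)

lemma vdeg_block_diag:
  assumes "is_matrix n W" "j < n + n'"
  shows "vdeg (n + n') (block_diag n W n' W') j = (if j < n then vdeg n W j else vdeg n' W' (j - n))"
proof (cases "j < n")
  case True
  have "{i. i < n + n' \<and> block_diag n W n' W' i j} = {i. i < n \<and> W i j}"
    using True assms(1) unfolding block_diag_def is_matrix_def by auto
  then show ?thesis using True by (simp add: vdeg_def)
next
  case False
  have "{i. i < n + n' \<and> block_diag n W n' W' i j} = {i. n \<le> i \<and> (i - n < n' \<and> W' (i - n) (j - n))}"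
    using False assms(2) unfolding block_diag_def by auto
  then show ?thesis
    using False card_shifted_Collect[of n "\<lambda>i. i < n' \<and> W' i (j - n)"] by (simp add: vdeg_def)
qed

lemma prod_supp_block_diag:
  assumes "is_matrix n W"
  shows "prod_supp (n + n') (block_diag n W n' W') x =
    prod_supp n W x \<union> (\<lambda>i. i + n) ` prod_supp n' W' (\<lambda>j. x (j + n))"
proof -
  let ?D = "block_diag n W n' W'"
  have low: "{j. j < n + n' \<and> ?D i j \<and> x j} = {j. j < n \<and> W i j \<and> x j}" if "i < n" for i
    using that assms unfolding block_diag_def is_matrix_def by auto
  have "{j. j < n + n' \<and> ?D i j \<and> x j} = {j. n \<le> j \<and> (j - n < n' \<and> W' (i - n) (j - n) \<and> x (j - n + n))}"
    if "n \<le> i" "i < n + n'" for i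
    using that unfolding block_diag_def by auto
  then have high: "card {j. j < n + n' \<and> ?D i j \<and> x j} = card {j. j < n' \<and> W' (i - n) j \<and> x (j + n)}"
    if "n \<le> i" "i < n + n'" for i
    using that card_shifted_Collect[of n "\<lambda>j. j < n' \<and> W' (i - n) j \<and> x (j + n)"] by simp
  have "prod_supp (n + n') ?D x = prod_supp n W x \<union>
      {i. n \<le> i \<and> (i - n < n' \<and> odd (card {j. j < n' \<and> W' (i - n) j \<and> x (j + n)}))}"
  proof (rule set_eqI)
    show "i \<in> prod_supp (n + n') ?D x \<longleftrightarrow> i \<in> prod_supp n W x \<union>
      {i. n \<le> i \<and> (i - n < n' \<and> odd (card {j. j < n' \<and> W' (i - n) j \<and> x (j + n)}))}" for i
      by (cases "i < n") (use low[of i] high[of i] in \<open>auto simp: prod_supp_def\<close>)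
  qed
  then show ?thesis
    using shifted_Collect[of n "\<lambda>i. i < n' \<and> odd (card {j. j < n' \<and> W' i j \<and> x (j + n)})"]
    by (simp add: prod_supp_def)
qed

lemma prod_supp_restrict: "prod_supp n W x = prod_supp n W (\<lambda>j. j < n \<and> x j)"
proof -
  have "{j. j < n \<and> W i j \<and> j < n \<and> x j} = {j. j < n \<and> W i j \<and> x j}" for i
    by auto
  then show ?thesis by (simp add: prod_supp_def)
qed

lemma M0_block_diag_le:
  assumes "is_matrix n W"
  shows "M0 (n + n') (block_diag n W n' W') \<le> M0 n W + M0 n' W'"
proof (rule M0_le)
  fix x
  have "card (prod_supp (n + n') (block_diag n W n' W') x) \<le>
      card (prod_supp n W x) + card ((\<lambda>i. i + n) ` prod_supp n' W' (\<lambda>j. x (j + n)))"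
    unfolding prod_supp_block_diag[OF assms] by (rule card_Un_le)
  also have "\<dots> = card (prod_supp n W (\<lambda>j. j < n \<and> x j)) + card (prod_supp n' W' (\<lambda>j. j < n' \<and> x (j + n)))"
    by (simp add: card_image prod_supp_restrict[of n W x] prod_supp_restrict[of n' W' "\<lambda>j. x (j + n)"])
  also have "\<dots> \<le> M0 n W + M0 n' W'"
    by (intro add_mono M0_ge) (simp_all add: is_vector_def)
  finally show "card (prod_supp (n + n') (block_diag n W n' W') x) \<le> M0 n W + M0 n' W'" .
qed

lemma bounded_wiring_block_diag:
  assumes "bounded_wiring n W P b" "bounded_wiring n' W' P b'"
  shows "bounded_wiring (n + n') (block_diag n W n' W') P (b + b')"
proof -
  have w: "is_wiring n W" "is_wiring n' W'" using assms by (auto simp: bounded_wiring_def)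
  then have m: "is_matrix n W" by (simp add: is_wiring_def)
  have "\<forall>j<n + n'. P (vdeg (n + n') (block_diag n W n' W') j)"
    using assms vdeg_block_diag[OF m] unfolding bounded_wiring_def by auto
  moreover have "M0 (n + n') (block_diag n W n' W') \<le> b + b'"
    using M0_block_diag_le[OF m, of n' W'] assms unfolding bounded_wiring_def by linarith
  ultimately show ?thesis using is_wiring_block_diag[OF w] by (simp add: bounded_wiring_def)
qed

lemma ex_bounded_wiring_add:
  assumes "\<exists>W. bounded_wiring n W P b" "\<exists>W. bounded_wiring n' W P b'"
  shows "\<exists>W. bounded_wiring (n + n') W P (b + b')"
  using assms bounded_wiring_block_diag by blast

lemma ex_bounded_wiring_mult:
  assumes "\<exists>W. bounded_wiring n W P b"
  shows "\<exists>W. bounded_wiring (q * n) W P (q * b)"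
proof (induction q)
  case 0
  have "bounded_wiring 0 (\<lambda>i j. False) P 0"
    using M_le_n[of 0 "\<lambda>i j. False" "\<lambda>_. False"]
    by (simp add: bounded_wiring_def is_wiring_def is_matrix_def)
  then show ?case by auto
next
  case (Suc q)
  from ex_bounded_wiring_add[OF assms Suc] show ?case by (simp add: add.commute)
qed

definition wiring_of_cols :: "nat list list \<Rightarrow> nat \<Rightarrow> nat \<Rightarrow> bool" where
  "wiring_of_cols L = (\<lambda>i j. j < length L \<and> i \<in> set (L ! j))"

definition valid_cols :: "nat list list \<Rightarrow> bool" where
  "valid_cols L \<longleftrightarrow>
    (\<forall>j\<in>set [0..<length L]. j \<in> set (L ! j) \<and> (\<forall>i\<in>set (L ! j). i < length L) \<and> distinct (L ! j))"

definition cols_weight :: "nat list list \<Rightarrow> bool list \<Rightarrow> nat" where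
  "cols_weight L xs = length (filter
     (\<lambda>i. odd (length (filter (\<lambda>j. i \<in> set (L ! j) \<and> xs ! j) [0..<length L]))) [0..<length L])"

lemma card_Collect_less_eq_length_filter: "card {j. j < n \<and> P j} = length (filter P [0..<n])"
proof -
  have "{j. j < n \<and> P j} = set (filter P [0..<n])" by auto
  then show ?thesis using distinct_card[of "filter P [0..<n]"] by simp
qed

lemma card_prod_supp_wiring_of_cols:
  "card (prod_supp (length L) (wiring_of_cols L) x) = cols_weight L (map x [0..<length L])"
proof -
  let ?n = "length L"
  have "{j. j < ?n \<and> wiring_of_cols L i j \<and> x j} =
      {j. j < ?n \<and> (i \<in> set (L ! j) \<and> map x [0..<?n] ! j)}" for i
    by (auto simp: wiring_of_cols_def)
  then show ?thesis
    by (simp add: prod_supp_def cols_weight_def card_Collect_less_eq_length_filter)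
qed

lemma ex_bounded_wiring_of_cols:
  assumes "valid_cols L" "length L = n" "\<forall>j\<in>set [0..<n]. P (length (L ! j))"
    "\<forall>xs\<in>set (List.n_lists n [True, False]). cols_weight L xs \<le> b"
  shows "\<exists>W. bounded_wiring n W P b"
proof
  have col: "{i. i < n \<and> wiring_of_cols L i j} = set (L ! j)" if "j < n" for j
    using assms(1,2) that unfolding valid_cols_def wiring_of_cols_def by auto
  have "is_wiring n (wiring_of_cols L)"
    using assms(1,2) unfolding valid_cols_def is_wiring_def is_matrix_def wiring_of_cols_def by auto
  moreover have "P (vdeg n (wiring_of_cols L) j)" if "j < n" for j
    using assms(1-3) col[OF that] that by (simp add: vdeg_def valid_cols_def distinct_card)
  moreover have "M0 n (wiring_of_cols L) \<le> b"
  proof (rule M0_le)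
    fix x
    have "map x [0..<n] \<in> set (List.n_lists n [True, False])"
      by (simp add: set_n_lists) auto
    then show "card (prod_supp n (wiring_of_cols L) x) \<le> b"
      using assms(2,4) card_prod_supp_wiring_of_cols[of L x] by simp
  qed
  ultimately show "bounded_wiring n (wiring_of_cols L) P b"
    by (simp add: bounded_wiring_def)
qed

lemma ex_bounded_wiring_small:
  "\<exists>W. bounded_wiring 1 W (\<lambda>d. d \<le> 2) 1"
  "\<exists>W. bounded_wiring 3 W (\<lambda>d. d \<le> 2) 2"
  "\<exists>W. bounded_wiring 3 W (\<lambda>d. d = 3) 3"
  "\<exists>W. bounded_wiring 4 W (\<lambda>d. d = 3) 3"
  "\<exists>W. bounded_wiring 5 W (\<lambda>d. d = 3) 4"
  "\<exists>W. bounded_wiring 6 W (\<lambda>d. d = 3) 4"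
  "\<exists>W. bounded_wiring 7 W (\<lambda>d. d = 3) 5"
  apply (rule ex_bounded_wiring_of_cols[where L = "[[0]]"]; code_simp)
  apply (rule ex_bounded_wiring_of_cols[where L = "[[0,1],[1,2],[2,0]]"]; code_simp)
  apply (rule ex_bounded_wiring_of_cols[where L = "[[0,1,2],[0,1,2],[0,1,2]]"]; code_simp)
  apply (rule ex_bounded_wiring_of_cols[where L = "[[0,1,2],[0,1,2],[0,1,2],[0,1,3]]"]; code_simp)
  apply (rule ex_bounded_wiring_of_cols[where L = "[[0,2,3],[1,2,4],[0,1,2],[2,3,4],[1,2,4]]"];
      code_simp)
  apply (rule ex_bounded_wiring_of_cols[where
        L = "[[0,1,2],[0,1,2],[0,1,2],[0,3,4],[0,3,4],[1,3,5]]"]; code_simp)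
  apply (rule ex_bounded_wiring_of_cols[where
        L = "[[0,1,6],[1,2,3],[1,2,3],[1,3,4],[1,3,4],[0,1,5],[0,1,6]]"]; code_simp)
  done

lemma ex_wiring_deg2: "\<exists>W\<in>A n 2. 3 * M0 n W \<le> 2 * n + 2"
proof -
  have "\<exists>W. bounded_wiring (n div 3 * 3 + n mod 3 * 1) W (\<lambda>d. d \<le> 2) (n div 3 * 2 + n mod 3 * 1)"
    by (intro ex_bounded_wiring_add ex_bounded_wiring_mult ex_bounded_wiring_small)
  then obtain W where "bounded_wiring n W (\<lambda>d. d \<le> 2) (n div 3 * 2 + n mod 3)"
    by auto
  moreover have "3 * (n div 3 * 2 + n mod 3) \<le> 2 * n + 2" by presburger
  ultimately show ?thesis by (auto simp: bounded_wiring_def A_def)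
qed

lemma ex_wiring_deg3:
  assumes "n \<ge> 3"
  shows "\<exists>W\<in>A_star n 3. 3 * M0 n W \<le> 2 * n + 3 \<and> (n mod 6 \<noteq> 3 \<longrightarrow> 3 * M0 n W \<le> 2 * n + 2)"
proof -
  define q where "q = n div 6"
  have n: "n = q * 6 + n mod 6" by (simp add: q_def)
  have from_bound: "?thesis"
    if "\<exists>W. bounded_wiring m W (\<lambda>d. d = 3) b" "m = n"
      "3 * b \<le> 2 * n + 3" "n mod 6 \<noteq> 3 \<longrightarrow> 3 * b \<le> 2 * n + 2" for m b
    using that by (auto simp: bounded_wiring_def A_star_def)
  note small = ex_bounded_wiring_small
  have six: "\<exists>W. bounded_wiring (p * 6) W (\<lambda>d. d = 3) (p * 4)" for p
    by (rule ex_bounded_wiring_mult[OF small(6)])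
  consider "n mod 6 = 0" | "n mod 6 = 1" | "n mod 6 = 2" | "n mod 6 = 3" | "n mod 6 = 4" | "n mod 6 = 5"
    by linarith
  then show ?thesis
  proof cases
    case 1
    show ?thesis
      by (rule from_bound[OF six[of q]]) (use n 1 in presburger)+
  next
    case 2
    with assms n have "q \<ge> 1" by linarith
    show ?thesis
      by (rule from_bound[OF ex_bounded_wiring_add[OF six[of "q - 1"] small(7)]])
        (use n 2 \<open>q \<ge> 1\<close> in presburger)+
  next
    case 3
    with assms n have "q \<ge> 1" by linarith
    show ?thesis
      by (rule from_bound[OF ex_bounded_wiring_add[OF six[of "q - 1"]
            ex_bounded_wiring_add[OF small(4) small(4)]]])
        (use n 3 \<open>q \<ge> 1\<close> in presburger)+
  next
    case 4
    show ?thesis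
      by (rule from_bound[OF ex_bounded_wiring_add[OF six[of q] small(3)]]) (use n 4 in presburger)+
  next
    case 5
    show ?thesis
      by (rule from_bound[OF ex_bounded_wiring_add[OF six[of q] small(4)]]) (use n 5 in presburger)+
  next
    case 6
    show ?thesis
      by (rule from_bound[OF ex_bounded_wiring_add[OF six[of q] small(5)]]) (use n 6 in presburger)+
  qed
qed

lemma finite_M0_image: "finite ((\<lambda>W. M0 n W) ` S)"
  by (rule finite_subset[of _ "{..n}"]) (auto simp: M_le_n)

lemma Min_M0_image_le: "W \<in> S \<Longrightarrow> Min ((\<lambda>W. M0 n W) ` S) \<le> M0 n W"
  by (rule Min_le[OF finite_M0_image]) blast

lemma Min_M0_image_attained:
  assumes "S \<noteq> {}" obtains W where "W \<in> S" "Min ((\<lambda>W. M0 n W) ` S) = M0 n W"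
  using Min_in[OF finite_M0_image, of n S] assms that by auto

lemma A_mono: "m \<le> m' \<Longrightarrow> A n m \<subseteq> A n m'"
  by (auto simp: A_def)

lemma eq_ceiling_two_thirds: "2 * n \<le> 3 * x \<Longrightarrow> 3 * x \<le> 2 * n + 2 \<Longrightarrow> x = (2 * n + 2) div (3::nat)"
  by presburger

lemma three_mu2_le: "3 * mu n 2 \<le> 2 * n + 2"
  using ex_wiring_deg2[of n] Min_M0_image_le unfolding mu_def by (meson le_trans mult_le_mono2)

lemma mu3_le_mu2: "mu n 3 \<le> mu n 2"
  using ex_wiring_deg2[of n] A_mono[of 2 3 n] unfolding mu_def
  by (intro Min_antimono finite_M0_image image_mono) auto

lemma two_mul_le_three_mu3: "2 * n \<le> 3 * mu n 3"
proof -
  have "A n 3 \<noteq> {}" using ex_wiring_deg2[of n] A_mono[of 2 3 n] by auto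
  then obtain W where "W \<in> A n 3" "mu n 3 = M0 n W"
    unfolding mu_def by (rule Min_M0_image_attained)
  then show ?thesis using two_mul_le_three_M0 by simp
qed

lemma mu2_eq: "mu n 2 = (2 * n + 2) div 3"
  using two_mul_le_three_mu3[of n] mu3_le_mu2[of n] three_mu2_le[of n]
  by (intro eq_ceiling_two_thirds) linarith+

lemma mu3_eq: "mu n 3 = (2 * n + 2) div 3"
  using two_mul_le_three_mu3[of n] mu3_le_mu2[of n] three_mu2_le[of n]
  by (intro eq_ceiling_two_thirds) linarith+

lemma mu_star_attained:
  assumes "n \<ge> 3"
  obtains W where "W \<in> A n 3" "\<forall>j<n. odd (vdeg n W j)" "mu_star n 3 = M0 n W"
proof -
  have "A_star n 3 \<noteq> {}" using ex_wiring_deg3[OF assms] by auto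
  then obtain W where "W \<in> A_star n 3" "mu_star n 3 = M0 n W"
    unfolding mu_star_def by (rule Min_M0_image_attained)
  then show thesis by (intro that) (auto simp: A_star_def A_def)
qed

lemma three_mu_star_le:
  assumes "n \<ge> 3"
  shows "3 * mu_star n 3 \<le> 2 * n + 3" "n mod 6 \<noteq> 3 \<Longrightarrow> 3 * mu_star n 3 \<le> 2 * n + 2"
  using ex_wiring_deg3[OF assms] Min_M0_image_le[of _ "A_star n 3" n]
  unfolding mu_star_def by (meson le_trans mult_le_mono2)+

lemma mu_star3_eq:
  assumes "n \<ge> 3" "n mod 6 \<noteq> 3"
  shows "mu_star n 3 = (2 * n + 2) div 3"
proof -
  obtain W where W: "W \<in> A n 3" "mu_star n 3 = M0 n W"
    using mu_star_attained[OF assms(1)] by blast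
  show ?thesis
    using two_mul_le_three_M0[OF W(1)] W(2) three_mu_star_le(2)[OF assms]
    by (intro eq_ceiling_two_thirds) simp_all
qed

lemma mu_star3_eq_mod6_eq3:
  assumes "n mod 6 = 3"
  shows "mu_star n 3 = (2 * n + 3) div 3"
proof -
  have n: "n \<ge> 3" using assms mod_less_eq_dividend[of n 6] by linarith
  obtain W where W: "W \<in> A n 3" "\<forall>j<n. odd (vdeg n W j)" "mu_star n 3 = M0 n W"
    using mu_star_attained[OF n] by blast
  have "3 * mu_star n 3 = 2 * n + 3"
    using M0_ge_mod6_eq3[OF W(1,2) assms] W(3) three_mu_star_le(1)[OF n] by simp
  then show ?thesis by simp
qed

theorem theorem1p2:
  fixes n :: nat
  assumes "n \<ge> 1"
  shows "mu n 3 = mu n 2 \<and>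
         (n \<ge> 3 \<longrightarrow>
            (\<forall>k::nat. k \<ge> 1 \<and> n = 6 * k - 3 \<longrightarrow> mu_star n 3 = 4 * k - 1) \<and>
            ((\<nexists>k::nat. k \<ge> 1 \<and> n = 6 * k - 3) \<longrightarrow> mu_star n 3 = mu n 3))"
proof (intro conjI impI allI)
  show "mu n 3 = mu n 2" by (simp only: mu2_eq mu3_eq)
  show "mu_star n 3 = 4 * k - 1" if "k \<ge> 1 \<and> n = 6 * k - 3" for k
  proof -
    have "n = 6 * (k - 1) + 3" using that by linarith
    then show ?thesis using that by (simp add: mu_star3_eq_mod6_eq3)
  qed
  show "mu_star n 3 = mu n 3" if "n \<ge> 3" "\<nexists>k. k \<ge> 1 \<and> n = 6 * k - 3"
  proof -
    have "n mod 6 \<noteq> 3"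
    proof
      assume "n mod 6 = 3"
      then have "n div 6 + 1 \<ge> 1 \<and> n = 6 * (n div 6 + 1) - 3"
        using div_mult_mod_eq[of n 6] by simp
      with that(2) show False by blast
    qed
    then show ?thesis using that(1) by (simp add: mu_star3_eq mu3_eq)
  qed
qed

end
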